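(* Let $a,b,c$ be real numbers with $0<a,b<+\infty$ and $a+b<c<a+b+1$. Define $$P(a,b,c):=\frac{\Gamma(c)\Gamma(c-a-b)}{\Gamma(c-a)\Gamma(c-b)},\qquad Q(a,b,c):=\frac{\Gamma(c)\Gamma(a+b+1-c)}{(c-a-b)\Gamma(a)\Gamma(b)},$$ and $q(a,b,c):=Q(a,b,c)$ if $P(a,b,c)\geq Q(a,b,c)$, $q(a,b,c):=P(a,b,c)-1$ if $P(a,b,c)<Q(a,b,c)$. Then for all $w\in(0,1)$, $$F(a,b,c;w)^2>P(a,b,c)^2-2P(a,b,c)Q(a,b,c)(1-w)^{c-a-b}+q(a,b,c)^2(1-w)^{2(c-a-b)}.$$
   Context: $F(\alpha,\beta,\gamma;w)$ denotes the Gauss hypergeometric function ${}_2F_1$ and $\Gamma$ the Gamma function. *)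

theory Defs
  imports "HOL-Analysis.Analysis"
begin

definition hyp2F1 :: "real \<Rightarrow> real \<Rightarrow> real \<Rightarrow> real \<Rightarrow> real" where
  "hyp2F1 a b c w =
     (\<Sum>n. pochhammer a n * pochhammer b n / (pochhammer c n * fact n) * w ^ n)"

definition PP :: "real \<Rightarrow> real \<Rightarrow> real \<Rightarrow> real" where
  "PP a b c = Gamma c * Gamma (c - a - b) / (Gamma (c - a) * Gamma (c - b))"

definition QQ :: "real \<Rightarrow> real \<Rightarrow> real \<Rightarrow> real" where
  "QQ a b c = Gamma c * Gamma (a + b + 1 - c) / ((c - a - b) * Gamma a * Gamma b)"

definition qq :: "real \<Rightarrow> real \<Rightarrow> real \<Rightarrow> real" where
  "qq a b c = (if PP a b c \<ge> QQ a b c then QQ a b c else PP a b c - 1)"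

end

theory Submission
  imports Defs "HOL-Real_Asymp.Real_Asymp"
begin

(*
  Let A_n be the coefficients of F(a,b,c;w), s = c - a - b, d = a + b + 1 - c = 1 - s, and
  p_n = (-s)_n / n! the coefficients of (1 - w)^s.  Gauss's summation gives \<Sum> A_n = P; it follows
  from the contiguous relation c (c-a-b) F(a,b,c;1) = (c-a)(c-b) F(a,b,c+1;1), iterated m times,
  as m \<rightarrow> \<infinity>, using (x)_n ~ n! n^(x-1) / \<Gamma>(x).  The partial sums of \<Sum> p_n are (d)_N / N! \<rightarrow> 0.

  Now A_(n+1) = r_n (d)_n / (n+1)! where r_n increases strictly to \<Gamma>(c)\<Gamma>(d) / (\<Gamma>(a)\<Gamma>(b)) = s Q,
  whereas -Q p_(n+1) = s Q (d)_n / (n+1)!.  Hence A_n + Q p_n < 0 for n \<ge> 1, so that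
  F + Q (1-w)^s - P = \<Sum> (A_n + Q p_n)(w^n - 1) > 0.  Squaring F > P - Q (1-w)^s, with P > 1,
  gives the bound for either choice of q.
*)

lemma notin_nonpos_Ints_if_pos: "0 < x \<Longrightarrow> (x::real) \<notin> \<int>\<^sub>\<le>\<^sub>0"
  by auto

lemma pochhammer_asymptotic:
  fixes z :: real
  assumes "z \<notin> \<int>\<^sub>\<le>\<^sub>0"
  shows "(\<lambda>n. pochhammer z n / (fact n * real n powr (z - 1))) \<longlonglongrightarrow> 1 / Gamma z"
proof (rule Lim_transform_eventually)
  show "(\<lambda>n. inverse (Gamma_series' z n)) \<longlonglongrightarrow> 1 / Gamma z"
    using assms by (auto intro!: tendsto_eq_intros Gamma_series'_LIMSEQ simp: Gamma_eq_zero_iff field_simps)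
  show "\<forall>\<^sub>F n in sequentially. inverse (Gamma_series' z n) = pochhammer z n / (fact n * real n powr (z - 1))"
    using eventually_gt_at_top[of 0]
  proof eventually_elim
    case (elim n)
    then obtain k where k: "n = Suc k" by (cases n) auto
    have "fact n * real n powr (z - 1) = fact k * real n powr z"
      using elim by (simp add: k powr_diff field_simps)
    then show ?case
      by (simp add: Gamma_series'_def k powr_def)
  qed
qed

lemma pochhammer_ratio_asymptotic:
  fixes x y u v :: real
  assumes "x \<notin> \<int>\<^sub>\<le>\<^sub>0" "y \<notin> \<int>\<^sub>\<le>\<^sub>0" "u \<notin> \<int>\<^sub>\<le>\<^sub>0" "v \<notin> \<int>\<^sub>\<le>\<^sub>0"
  shows "(\<lambda>n. pochhammer x n * pochhammer y n / (pochhammer u n * pochhammer v n)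
            * real n powr (u + v - x - y)) \<longlonglongrightarrow> Gamma u * Gamma v / (Gamma x * Gamma y)"
proof (rule Lim_transform_eventually)
  define q where "q z n = pochhammer z n / (fact n * real n powr (z - 1))" for z :: real and n
  show "(\<lambda>n. q x n * q y n / (q u n * q v n)) \<longlonglongrightarrow> Gamma u * Gamma v / (Gamma x * Gamma y)"
  proof -
    have "q z \<longlonglongrightarrow> 1 / Gamma z" if "z \<notin> \<int>\<^sub>\<le>\<^sub>0" for z
      unfolding q_def using that by (rule pochhammer_asymptotic)
    then have "(\<lambda>n. q x n * q y n / (q u n * q v n))
                 \<longlonglongrightarrow> (1 / Gamma x) * (1 / Gamma y) / ((1 / Gamma u) * (1 / Gamma v))"
      using assms by (intro tendsto_intros) (auto simp: Gamma_eq_zero_iff)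
    then show ?thesis
      using assms by (simp add: Gamma_eq_zero_iff field_simps)
  qed
  show "\<forall>\<^sub>F n in sequentially. q x n * q y n / (q u n * q v n) =
          pochhammer x n * pochhammer y n / (pochhammer u n * pochhammer v n) * real n powr (u + v - x - y)"
    using eventually_gt_at_top[of 0]
  proof eventually_elim
    case (elim n)
    have "real n powr (u - 1) * real n powr (v - 1) / (real n powr (x - 1) * real n powr (y - 1))
            = real n powr (u + v - x - y)"
      using elim by (simp add: powr_add[symmetric] powr_diff[symmetric] algebra_simps)
    moreover have "pochhammer z n \<noteq> 0" if "z \<notin> \<int>\<^sub>\<le>\<^sub>0" for z :: real
      using that by (auto simp: pochhammer_eq_0_iff)
    ultimately show ?case
      unfolding q_def using assms elim by (simp add: field_simps)
  qed
qed

definition hyp2F1_coeff :: "real \<Rightarrow> real \<Rightarrow> real \<Rightarrow> nat \<Rightarrow> real" where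
  "hyp2F1_coeff a b c n = pochhammer a n * pochhammer b n / (pochhammer c n * fact n)"

lemma hyp2F1_coeff_0 [simp]: "hyp2F1_coeff a b c 0 = 1"
  by (simp add: hyp2F1_coeff_def)

lemma hyp2F1_coeff_pos: "0 < a \<Longrightarrow> 0 < b \<Longrightarrow> 0 < c \<Longrightarrow> 0 < hyp2F1_coeff a b c n"
  unfolding hyp2F1_coeff_def by (simp add: pochhammer_pos)

lemma hyp2F1_coeff_asymptotic:
  assumes "0 < a" "0 < b" "0 < c"
  shows "(\<lambda>n. hyp2F1_coeff a b c n * real n powr (c + 1 - a - b))
           \<longlonglongrightarrow> Gamma c / (Gamma a * Gamma b)"
  using pochhammer_ratio_asymptotic[of a b c 1] assms
  by (simp add: hyp2F1_coeff_def pochhammer_fact notin_nonpos_Ints_if_pos)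

lemma summable_hyp2F1_coeff:
  assumes "0 < a" "0 < b" "a + b < c"
  shows "summable (hyp2F1_coeff a b c)"
proof -
  define L where "L = Gamma c / (Gamma a * Gamma b)"
  define e where "e = c + 1 - a - b"
  have "\<forall>\<^sub>F n in sequentially. hyp2F1_coeff a b c n * real n powr e < L + 1"
    using hyp2F1_coeff_asymptotic[of a b c] assms unfolding L_def e_def
    by (intro order_tendstoD) auto
  with eventually_gt_at_top[of 0]
  have "\<forall>\<^sub>F n in sequentially. norm (hyp2F1_coeff a b c n) \<le> (L + 1) * real n powr - e"
  proof eventually_elim
    case (elim n)
    then have "hyp2F1_coeff a b c n \<le> (L + 1) / real n powr e"
      by (simp add: pos_le_divide_eq)
    then show ?case
      using hyp2F1_coeff_pos[of a b c n] assms by (simp add: powr_minus divide_inverse)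
  qed
  moreover have "summable (\<lambda>n. (L + 1) * real n powr - e)"
    using assms by (intro summable_mult) (simp add: summable_real_powr_iff e_def)
  ultimately show ?thesis
    by (rule summable_comparison_test_ev)
qed

lemma tendsto_mult_hyp2F1_coeff:
  assumes "0 < a" "0 < b" "a + b < c"
  shows "(\<lambda>n. real n * hyp2F1_coeff a b c n) \<longlonglongrightarrow> 0"
proof (rule Lim_transform_eventually)
  have "(\<lambda>n. real n powr (a + b - c)) \<longlonglongrightarrow> 0"
    using assms by real_asymp
  from tendsto_mult[OF hyp2F1_coeff_asymptotic this] assms
  show "(\<lambda>n. hyp2F1_coeff a b c n * real n powr (c + 1 - a - b) * real n powr (a + b - c))
               \<longlonglongrightarrow> 0"
    by simp
  show "\<forall>\<^sub>F n in sequentially. hyp2F1_coeff a b c n * real n powr (c + 1 - a - b) * real n powr (a + b - c)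
          = real n * hyp2F1_coeff a b c n"
    using eventually_gt_at_top[of 0] by eventually_elim (simp add: powr_add[symmetric])
qed

lemma hyp2F1_coeff_Suc:
  assumes "0 < c"
  shows "real (Suc n) * hyp2F1_coeff a b c (Suc n) = hyp2F1_coeff a b c n * ((a + n) * (b + n)) / (c + n)"
proof -
  have "pochhammer c n \<noteq> 0" "c + real n \<noteq> 0"
    using assms pochhammer_pos[of c n] by auto
  then show ?thesis
    by (simp add: hyp2F1_coeff_def pochhammer_Suc fact_Suc divide_simps del: of_nat_Suc)
qed

lemma hyp2F1_coeff_c_plus_1:
  assumes "0 < c"
  shows "hyp2F1_coeff a b (c + 1) n = hyp2F1_coeff a b c n * c / (c + n)"
proof -
  have "pochhammer (c + 1) n = pochhammer c n * (c + n) / c"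
    using assms pochhammer_rec[of c n] pochhammer_Suc[of c n] by simp
  moreover have "pochhammer c n \<noteq> 0" "pochhammer (c + 1) n \<noteq> 0"
    using assms pochhammer_pos[of c n] pochhammer_pos[of "c + 1" n] by auto
  ultimately show ?thesis
    using assms unfolding hyp2F1_coeff_def by (simp add: divide_simps) (simp add: ac_simps)
qed

lemma hyp2F1_coeff_contiguous:
  assumes "0 < c"
  shows "c * (c - a - b) * hyp2F1_coeff a b c n - (c - a) * (c - b) * hyp2F1_coeff a b (c + 1) n
           = c * (real n * hyp2F1_coeff a b c n) - c * (real (Suc n) * hyp2F1_coeff a b c (Suc n))"
proof -
  have "0 < c + real n"
    using assms by simp
  then show ?thesis
    unfolding hyp2F1_coeff_Suc[OF assms] hyp2F1_coeff_c_plus_1[OF assms]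
    by (simp add: field_simps)
qed

lemma suminf_hyp2F1_coeff_contiguous:
  assumes "0 < a" "0 < b" "a + b < c"
  shows "c * (c - a - b) * (\<Sum>n. hyp2F1_coeff a b c n)
           = (c - a) * (c - b) * (\<Sum>n. hyp2F1_coeff a b (c + 1) n)"
proof -
  have c: "0 < c"
    using assms by simp
  define g where "g n = c * (real n * hyp2F1_coeff a b c n)" for n
  have "g \<longlonglongrightarrow> 0"
    unfolding g_def using tendsto_mult_hyp2F1_coeff[OF assms] by (rule tendsto_mult_right_zero)
  then have "(\<lambda>n. g n - g (Suc n)) sums (g 0 - 0)"
    by (rule telescope_sums')
  then have "(\<lambda>n. c * (c - a - b) * hyp2F1_coeff a b c n
                   - (c - a) * (c - b) * hyp2F1_coeff a b (c + 1) n) sums 0" (is "?u sums 0")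
    by (simp add: g_def hyp2F1_coeff_contiguous[OF c])
  moreover have "?u sums (c * (c - a - b) * (\<Sum>n. hyp2F1_coeff a b c n)
                          - (c - a) * (c - b) * (\<Sum>n. hyp2F1_coeff a b (c + 1) n))"
    using assms by (intro sums_diff sums_mult summable_sums summable_hyp2F1_coeff) auto
  ultimately show ?thesis
    using sums_unique2 by fastforce
qed

lemma suminf_hyp2F1_coeff_c_plus_m:
  assumes "0 < a" "0 < b" "a + b < c"
  shows "(\<Sum>n. hyp2F1_coeff a b c n)
           = pochhammer (c - a) m * pochhammer (c - b) m / (pochhammer c m * pochhammer (c - a - b) m)
             * (\<Sum>n. hyp2F1_coeff a b (c + real m) n)"
  using assms(3)
proof (induction m arbitrary: c)
  case 0
  then show ?case by simp
next
  case (Suc m)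
  have pos: "0 < c" "0 < c - a - b"
    using assms Suc.prems by auto
  then have "c * (c - a - b) \<noteq> 0"
    by simp
  then have "(\<Sum>n. hyp2F1_coeff a b c n)
          = (c - a) * (c - b) / (c * (c - a - b)) * (\<Sum>n. hyp2F1_coeff a b (c + 1) n)"
    using suminf_hyp2F1_coeff_contiguous[OF assms(1,2) Suc.prems]
    by (simp add: nonzero_eq_divide_eq ac_simps)
  also have "(\<Sum>n. hyp2F1_coeff a b (c + 1) n)
      = pochhammer (c - a + 1) m * pochhammer (c - b + 1) m
          / (pochhammer (c + 1) m * pochhammer (c - a - b + 1) m)
        * (\<Sum>n. hyp2F1_coeff a b (c + real (Suc m)) n)"
    using Suc.IH[of "c + 1"] Suc.prems by (simp add: algebra_simps)
  finally show ?case
    using pos by (simp add: pochhammer_rec field_simps)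
qed

lemma pochhammer_mono:
  fixes x y :: real
  assumes "0 < x" "x \<le> y"
  shows "pochhammer x n \<le> pochhammer y n"
proof (induction n)
  case (Suc n)
  then show ?case
    using assms by (simp add: pochhammer_Suc) (intro mult_mono pochhammer_nonneg, auto)
qed simp

lemma mult_hyp2F1_coeff_Suc_antimono:
  assumes "0 < a" "0 < b" "0 < c" "c \<le> c'"
  shows "c' * hyp2F1_coeff a b c' (Suc n) \<le> c * hyp2F1_coeff a b c (Suc n)"
proof -
  have eq: "x * hyp2F1_coeff a b x (Suc n)
              = pochhammer a (Suc n) * pochhammer b (Suc n) / (pochhammer (x + 1) n * fact (Suc n))"
    if "0 < x" for x
    using that by (simp add: hyp2F1_coeff_def pochhammer_rec)
  have "pochhammer (c + 1) n \<le> pochhammer (c' + 1) n"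
    using assms by (intro pochhammer_mono) auto
  then have "pochhammer a (Suc n) * pochhammer b (Suc n) / (pochhammer (c' + 1) n * fact (Suc n))
               \<le> pochhammer a (Suc n) * pochhammer b (Suc n) / (pochhammer (c + 1) n * fact (Suc n))"
    using assms
    by (intro divide_left_mono mult_right_mono mult_pos_pos mult_nonneg_nonneg pochhammer_pos pochhammer_nonneg)
       auto
  then show ?thesis
    using assms by (simp add: eq)
qed

lemma suminf_hyp2F1_coeff_tendsto_1:
  assumes "0 < a" "0 < b" "a + b < c"
  shows "(\<lambda>m. \<Sum>n. hyp2F1_coeff a b (c + real m) n) \<longlonglongrightarrow> 1"
proof -
  define tail where "tail c' = (\<Sum>n. hyp2F1_coeff a b c' (Suc n))" for c'
  have c: "0 < c"
    using assms by simp
  have summable_tail: "summable (\<lambda>n. hyp2F1_coeff a b (c + real m) (Suc n))" for m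
    using assms by (subst summable_Suc_iff) (intro summable_hyp2F1_coeff, auto)
  have tail_nonneg: "0 \<le> tail (c + real m)" for m
    unfolding tail_def using assms
    by (intro suminf_nonneg summable_tail) (simp add: hyp2F1_coeff_pos less_imp_le)
  have tail_le: "tail (c + real m) \<le> c / (c + real m) * tail c" for m
  proof -
    have "tail (c + real m) \<le> (\<Sum>n. c / (c + real m) * hyp2F1_coeff a b c (Suc n))"
      unfolding tail_def
    proof (rule suminf_le)
      show "hyp2F1_coeff a b (c + real m) (Suc n) \<le> c / (c + real m) * hyp2F1_coeff a b c (Suc n)" for n
        using mult_hyp2F1_coeff_Suc_antimono[OF assms(1,2) c, of "c + real m" n] c
        by (simp add: field_simps)
    qed (use summable_tail[of 0] summable_tail[of m] in \<open>auto intro: summable_mult\<close>)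
    also have "\<dots> = c / (c + real m) * tail c"
      unfolding tail_def using summable_tail[of 0] by (subst suminf_mult) auto
    finally show ?thesis .
  qed
  have "(\<lambda>m. c / (c + real m)) \<longlonglongrightarrow> 0"
    by real_asymp
  then have bound_lim: "(\<lambda>m. c / (c + real m) * tail c) \<longlonglongrightarrow> 0"
    by (rule tendsto_mult_left_zero)
  have "(\<lambda>m. tail (c + real m)) \<longlonglongrightarrow> 0"
  proof (rule tendsto_sandwich[OF _ _ tendsto_const bound_lim])
    show "\<forall>\<^sub>F m in sequentially. 0 \<le> tail (c + real m)"
      using tail_nonneg by simp
    show "\<forall>\<^sub>F m in sequentially. tail (c + real m) \<le> c / (c + real m) * tail c"
      using tail_le by simp
  qed
  then have "(\<lambda>m. 1 + tail (c + real m)) \<longlonglongrightarrow> 1"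
    using tendsto_add[OF tendsto_const[of 1]] by fastforce
  moreover have "(\<Sum>n. hyp2F1_coeff a b (c + real m) n) = 1 + tail (c + real m)" for m
  proof -
    have "summable (hyp2F1_coeff a b (c + real m))"
      using assms by (intro summable_hyp2F1_coeff) auto
    from suminf_split_head[OF this] show ?thesis
      unfolding tail_def by simp
  qed
  ultimately show ?thesis
    by simp
qed

theorem Gauss_summation:
  assumes "0 < a" "0 < b" "a + b < c"
  shows "hyp2F1_coeff a b c sums PP a b c"
proof -
  define R where
    "R m = pochhammer (c - a) m * pochhammer (c - b) m / (pochhammer c m * pochhammer (c - a - b) m)" for m
  have "R \<longlonglongrightarrow> PP a b c"
  proof (rule Lim_transform_eventually)
    show "(\<lambda>m. R m * real m powr (c + (c - a - b) - (c - a) - (c - b))) \<longlonglongrightarrow> PP a b c"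
      unfolding R_def PP_def using assms
      by (intro pochhammer_ratio_asymptotic notin_nonpos_Ints_if_pos) auto
    show "\<forall>\<^sub>F m in sequentially. R m * real m powr (c + (c - a - b) - (c - a) - (c - b)) = R m"
      using eventually_gt_at_top[of 0] by eventually_elim simp
  qed
  then have "(\<lambda>m. R m * (\<Sum>n. hyp2F1_coeff a b (c + real m) n)) \<longlonglongrightarrow> PP a b c * 1"
    by (intro tendsto_mult suminf_hyp2F1_coeff_tendsto_1 assms)
  then have "(\<Sum>n. hyp2F1_coeff a b c n) = PP a b c"
    unfolding R_def suminf_hyp2F1_coeff_c_plus_m[OF assms, symmetric] by (simp add: LIMSEQ_const_iff)
  with summable_sums[OF summable_hyp2F1_coeff[OF assms]] show ?thesis
    by simp
qed

lemma one_less_PP: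
  assumes "0 < a" "0 < b" "a + b < c"
  shows "1 < PP a b c"
proof -
  have "0 < c"
    using assms by simp
  have "summable (\<lambda>n. hyp2F1_coeff a b c (Suc n))"
    using summable_hyp2F1_coeff[OF assms] by (simp add: summable_Suc_iff)
  then have "0 < (\<Sum>n. hyp2F1_coeff a b c (Suc n))"
    using assms \<open>0 < c\<close> by (intro suminf_pos hyp2F1_coeff_pos)
  then show ?thesis
    using suminf_split_head[OF summable_hyp2F1_coeff[OF assms]] sums_unique[OF Gauss_summation[OF assms]]
    by simp
qed

lemma gbinomial_mult_neg_one_power:
  fixes s :: real
  shows "(s gchoose n) * (- 1) ^ n = pochhammer (- s) n / fact n"
proof -
  have "(- 1 :: real) ^ n * (- 1) ^ n = 1"
    by (simp add: power_mult_distrib[symmetric])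
  then show ?thesis
    by (simp add: gbinomial_pochhammer field_simps)
qed

lemma binomial_series_one_minus:
  fixes s w :: real
  assumes "\<bar>w\<bar> < 1"
  shows "(\<lambda>n. pochhammer (- s) n / fact n * w ^ n) sums (1 - w) powr s"
proof -
  have "(\<lambda>n. (s gchoose n) * (- w) ^ n) sums (1 + - w) powr s"
    using assms by (intro gen_binomial_real) simp
  moreover have "(s gchoose n) * (- w) ^ n = pochhammer (- s) n / fact n * w ^ n" for n
    unfolding gbinomial_mult_neg_one_power[symmetric] power_minus[of w] by (simp only: ac_simps)
  ultimately show ?thesis
    by simp
qed

lemma binomial_series_at_one:
  fixes s :: real
  assumes "0 < s" "s < 1"
  shows "(\<lambda>n. pochhammer (- s) n / fact n) sums 0"
proof -
  have partial_sum: "(\<Sum>k\<le>N. pochhammer (- s) k / fact k) = pochhammer (1 - s) N / fact N" for N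
    using gbinomial_sum_lower_neg[of s N] gbinomial_mult_neg_one_power[of "s - 1" N]
    by (simp add: gbinomial_mult_neg_one_power mult.commute)
  have "(\<lambda>N. pochhammer (1 - s) N / fact N) \<longlonglongrightarrow> 0"
  proof (rule Lim_transform_eventually)
    have "(\<lambda>N. real N powr - s) \<longlonglongrightarrow> 0"
      using assms by real_asymp
    from tendsto_mult[OF pochhammer_asymptotic[of "1 - s"] this] assms
    show "(\<lambda>N. pochhammer (1 - s) N / (fact N * real N powr (1 - s - 1)) * real N powr - s) \<longlonglongrightarrow> 0"
      by (simp add: notin_nonpos_Ints_if_pos)
    show "\<forall>\<^sub>F N in sequentially.
            pochhammer (1 - s) N / (fact N * real N powr (1 - s - 1)) * real N powr - s
              = pochhammer (1 - s) N / fact N"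
      by simp
  qed
  then show ?thesis
    by (simp add: sums_def LIMSEQ_lessThan_iff_atMost partial_sum)
qed

lemma pochhammer_Suc_ratio_tendsto:
  fixes x y u v :: real
  assumes "0 < x" "0 < y" "0 < u" "0 < v" "u + v = x + y + 1"
  shows "(\<lambda>n. pochhammer x (Suc n) * pochhammer y (Suc n) / (pochhammer u (Suc n) * pochhammer v n))
           \<longlonglongrightarrow> Gamma u * Gamma v / (Gamma x * Gamma y)"
proof -
  define R where "R n = pochhammer x n * pochhammer y n / (pochhammer u n * pochhammer v n)" for n
  have "u + v - x - y = 1"
    using assms by simp
  then have "(\<lambda>n. R n * real n powr 1) \<longlonglongrightarrow> Gamma u * Gamma v / (Gamma x * Gamma y)"
    unfolding R_def using assms pochhammer_ratio_asymptotic[of x y u v] by (simp add: notin_nonpos_Ints_if_pos)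
  from LIMSEQ_Suc[OF this]
  have "(\<lambda>n. R (Suc n) * real (Suc n)) \<longlonglongrightarrow> Gamma u * Gamma v / (Gamma x * Gamma y)"
    by (simp del: of_nat_Suc)
  moreover have "(\<lambda>n. (v + real n) / real (Suc n)) \<longlonglongrightarrow> 1"
    by real_asymp
  ultimately have "(\<lambda>n. R (Suc n) * real (Suc n) * ((v + real n) / real (Suc n)))
                     \<longlonglongrightarrow> Gamma u * Gamma v / (Gamma x * Gamma y) * 1"
    by (rule tendsto_mult)
  moreover have "R (Suc n) * real (Suc n) * ((v + real n) / real (Suc n))
      = pochhammer x (Suc n) * pochhammer y (Suc n) / (pochhammer u (Suc n) * pochhammer v n)" for n
  proof -
    have "pochhammer u (Suc n) \<noteq> 0" "pochhammer v n \<noteq> 0" "v + real n \<noteq> 0"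
      using assms pochhammer_pos[of u "Suc n"] pochhammer_pos[of v n] by auto
    then show ?thesis
      unfolding R_def pochhammer_Suc[of v n] by (simp add: divide_simps del: of_nat_Suc)
  qed
  ultimately show ?thesis
    by simp
qed

lemma hyp2F1_coeff_Suc_less:
  assumes "0 < a" "0 < b" "a + b < c" "c < a + b + 1"
  shows "hyp2F1_coeff a b c (Suc n)
           < Gamma c * Gamma (a + b + 1 - c) / (Gamma a * Gamma b)
             * (pochhammer (a + b + 1 - c) n / fact (Suc n))"
proof -
  define d where "d = a + b + 1 - c"
  define r where "r k = pochhammer a (Suc k) * pochhammer b (Suc k) / (pochhammer c (Suc k) * pochhammer d k)"
    for k
  have pos: "0 < c" "0 < d"
    using assms by (auto simp: d_def)
  have r_Suc: "r (Suc k) = r k * ((a + Suc k) * (b + Suc k) / ((c + Suc k) * (d + k)))" for k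
    unfolding r_def pochhammer_Suc[of _ "Suc k"] pochhammer_Suc[of d k]
    by (simp add: ac_simps del: of_nat_Suc)
  have "r k < r (Suc k)" for k
  proof -
    have "(a + Suc k) * (b + Suc k) - (c + Suc k) * (d + k) = a * b + c * (c - a - b)"
      by (simp add: d_def algebra_simps)
    also have "\<dots> > 0"
      using assms by (intro add_pos_pos mult_pos_pos) auto
    finally have "1 < (a + Suc k) * (b + Suc k) / ((c + Suc k) * (d + k))" (is "1 < ?ratio")
      using pos by simp
    moreover have "0 < r k"
      unfolding r_def using assms pos by (simp add: pochhammer_pos)
    ultimately have "r k * 1 < r k * ?ratio"
      by (intro mult_strict_left_mono)
    then show ?thesis
      unfolding r_Suc by simp
  qed
  moreover have "r \<longlonglongrightarrow> Gamma c * Gamma d / (Gamma a * Gamma b)"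
    unfolding r_def using assms pos by (intro pochhammer_Suc_ratio_tendsto) (auto simp: d_def)
  ultimately have "r n < Gamma c * Gamma d / (Gamma a * Gamma b)"
    using incseq_le[of r] order.strict_trans2 by (metis incseq_SucI less_imp_le)
  moreover have "0 < pochhammer d n / fact (Suc n)"
    using pos by (simp add: pochhammer_pos)
  moreover have "hyp2F1_coeff a b c (Suc n) = r n * (pochhammer d n / fact (Suc n))"
    unfolding hyp2F1_coeff_def r_def using pochhammer_pos[OF pos(2), of n] by simp
  ultimately show ?thesis
    unfolding d_def[symmetric] by (metis mult_strict_right_mono)
qed

lemma hyp2F1_coeff_plus_QQ_binomial_neg:
  assumes "0 < a" "0 < b" "a + b < c" "c < a + b + 1" "0 < n"
  shows "hyp2F1_coeff a b c n + QQ a b c * (pochhammer (a + b - c) n / fact n) < 0"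
proof -
  obtain k where n: "n = Suc k"
    using assms(5) by (cases n) auto
  define L where "L = Gamma c * Gamma (a + b + 1 - c) / (Gamma a * Gamma b)"
  define X where "X = pochhammer (a + b + 1 - c) k / fact (Suc k)"
  have binomial_coeff: "pochhammer (a + b - c) n / fact n = (a + b - c) * X"
    unfolding X_def n pochhammer_rec by (simp add: algebra_simps)
  have "QQ a b c * (pochhammer (a + b - c) n / fact n) = - (QQ a b c * (c - a - b)) * X"
    unfolding binomial_coeff by (simp add: algebra_simps)
  also have "QQ a b c * (c - a - b) = L"
    using assms unfolding QQ_def L_def by simp
  finally show ?thesis
    using hyp2F1_coeff_Suc_less[OF assms(1-4), of k] unfolding n L_def[symmetric] X_def[symmetric]
    by simp
qed

lemma hyp2F1_sums:
  assumes "0 < a" "0 < b" "a + b < c" "\<bar>w\<bar> \<le> 1"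
  shows "(\<lambda>n. hyp2F1_coeff a b c n * w ^ n) sums hyp2F1 a b c w"
proof -
  have "summable (\<lambda>n. hyp2F1_coeff a b c n * w ^ n)"
  proof (rule summable_comparison_test'[OF summable_hyp2F1_coeff[OF assms(1-3)]])
    fix n
    have "0 < hyp2F1_coeff a b c n"
      using assms by (intro hyp2F1_coeff_pos) auto
    then show "norm (hyp2F1_coeff a b c n * w ^ n) \<le> hyp2F1_coeff a b c n"
      using assms(4) by (simp add: abs_mult power_abs mult_left_le power_le_one)
  qed
  then show ?thesis
    unfolding hyp2F1_def hyp2F1_coeff_def by (rule summable_sums)
qed

lemma sums_less_power_series_sums:
  fixes f :: "nat \<Rightarrow> real"
  assumes "f sums S" "(\<lambda>n. f n * w ^ n) sums T" "\<And>n. 0 < n \<Longrightarrow> f n < 0" "0 < w" "w < 1"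
  shows "S < T"
proof -
  have diff: "(\<lambda>n. f n * w ^ n - f n) sums (T - S)"
    using assms(1,2) by (rule sums_diff[rotated])
  have pos: "0 < f n * w ^ n - f n" if "0 < n" for n
  proof -
    have "0 < f n * (w ^ n - 1)"
      using assms(3-5) that by (intro mult_neg_neg) (auto simp: power_less_one_iff)
    then show ?thesis
      by (simp add: algebra_simps)
  qed
  have "0 < (\<Sum>n. f n * w ^ n - f n)"
  proof (rule suminf_pos2[of _ 1])
    show "0 \<le> f n * w ^ n - f n" for n
      using pos[of n] by (cases n) auto
  qed (use diff pos[of 1] in \<open>auto simp: sums_summable\<close>)
  then show ?thesis
    using sums_unique[OF diff] by simp
qed

lemma square_gt_of_gt_linear:
  fixes F P Q t :: real
  assumes "P - Q * t < F" "1 < P" "0 < Q" "0 < t" "t < 1"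
  shows "F\<^sup>2 > P\<^sup>2 - 2 * P * Q * t + (if P \<ge> Q then Q else P - 1)\<^sup>2 * t\<^sup>2"
proof (cases "0 \<le> P - Q * t")
  case True
  then have "(P - Q * t)\<^sup>2 < F\<^sup>2"
    using assms(1) by (intro power_strict_mono) auto
  moreover have "(if P \<ge> Q then Q else P - 1)\<^sup>2 \<le> Q\<^sup>2"
    using assms by (auto intro!: power_mono)
  then have "(if P \<ge> Q then Q else P - 1)\<^sup>2 * t\<^sup>2 \<le> Q\<^sup>2 * t\<^sup>2"
    by (rule mult_right_mono) simp
  ultimately show ?thesis
    by (simp add: power2_eq_square algebra_simps)
next
  case False
  have "Q * t < Q"
    using assms by simp
  then have "(if P \<ge> Q then Q else P - 1)\<^sup>2 * t\<^sup>2 \<le> P\<^sup>2 * 1"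
    using False assms by (intro mult_mono power_mono) (auto simp: power_le_one)
  moreover have "P\<^sup>2 < P * Q * t"
    using False assms(2) by (simp add: power2_eq_square mult.assoc)
  moreover have "0 \<le> F\<^sup>2"
    by simp
  ultimately show ?thesis
    by linarith
qed

theorem lemma5p3:
  fixes a b c w :: real
  assumes "0 < a" "0 < b" "a + b < c" "c < a + b + 1"
    and "0 < w" "w < 1"
  shows "(hyp2F1 a b c w)^2 >
           (PP a b c)^2 - 2 * PP a b c * QQ a b c * (1 - w) powr (c - a - b)
           + (qq a b c)^2 * (1 - w) powr (2 * (c - a - b))"
proof -
  define s where "s = c - a - b"
  define t where "t = (1 - w) powr s"
  define f where "f n = hyp2F1_coeff a b c n + QQ a b c * (pochhammer (- s) n / fact n)" for n
  have s: "0 < s" "s < 1" "- s = a + b - c"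
    using assms by (auto simp: s_def)
  have t: "0 < t" "t < 1"
    using assms s powr_less_mono2[of s "1 - w" 1] by (auto simp: t_def)
  have QQ_pos: "0 < QQ a b c"
    unfolding QQ_def using assms by (intro divide_pos_pos mult_pos_pos Gamma_real_pos) auto
  have "f sums (PP a b c + QQ a b c * 0)"
    unfolding f_def using assms s
    by (intro sums_add sums_mult Gauss_summation binomial_series_at_one) auto
  moreover have "(\<lambda>n. f n * w ^ n) sums (hyp2F1 a b c w + QQ a b c * t)"
    unfolding f_def t_def distrib_right mult.assoc using assms
    by (intro sums_add sums_mult hyp2F1_sums binomial_series_one_minus) auto
  moreover have "f n < 0" if "0 < n" for n
    unfolding f_def s(3) using assms(1-4) that by (rule hyp2F1_coeff_plus_QQ_binomial_neg)
  ultimately have "PP a b c + QQ a b c * 0 < hyp2F1 a b c w + QQ a b c * t"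
    using assms(5,6) by (rule sums_less_power_series_sums)
  then have "PP a b c - QQ a b c * t < hyp2F1 a b c w"
    by simp
  from square_gt_of_gt_linear[OF this one_less_PP QQ_pos t] assms
  show ?thesis
    unfolding qq_def t_def s_def[symmetric] by (simp add: powr_add[symmetric] power2_eq_square)
qed

end
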